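(* Let $A$ be a real $n\times n$ matrix with $n\ge2$ and strictly negative diagonal entries. If $A$ is stable, then some $2\times2$ principal submatrix of $A$ is stable.
   Context: A square matrix is stable if all its eigenvalues have strictly negative real part. A principal submatrix is obtained by restricting rows and columns to the same index set. *)

theory Defs
  imports Complex_Main "Jordan_Normal_Form.Char_Poly" "Jordan_Normal_Form.DL_Submatrix"
begin

definition stable_mat :: "real mat \<Rightarrow> bool" where
  "stable_mat A \<longleftrightarrow> (\<forall>z::complex. eigenvalue (map_mat complex_of_real A) z \<longrightarrow> Re z < 0)"

end

theory Submission
  imports Defs "Jordan_Normal_Form.Schur_Decomposition"
begin

(* Over the complex numbers A is similar to an upper triangular matrix (Schur), so
   tr A and tr (A^2) are the sums of the eigenvalues e_k and of their squares.  Since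
   Re(e^2) <= (Re e)^2 and all Re e_k < 0, we get for n >= 2
       tr (A^2) = sum Re(e_k^2) <= sum (Re e_k)^2 < (sum Re e_k)^2 = (tr A)^2.
   On the other hand (tr A)^2 - tr (A^2) = sum_{i,k} (a_ii a_kk - a_ik a_ki), so some
   2x2 principal minor with i < k is positive.  The corresponding 2x2 submatrix has
   negative trace and positive determinant, hence both roots of its characteristic
   polynomial z^2 - tr z + det lie in the open left half plane. *)

definition mat_trace :: "'a::comm_ring_1 mat \<Rightarrow> 'a" where
  "mat_trace M = (\<Sum>i<dim_row M. M $$ (i, i))"

lemma mat_trace_mult_comm:
  fixes X Y :: "'a::comm_ring_1 mat"
  assumes "X \<in> carrier_mat n m" "Y \<in> carrier_mat m n"
  shows "mat_trace (X * Y) = mat_trace (Y * X)"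
proof -
  have "mat_trace (X * Y) = (\<Sum>i<n. \<Sum>k<m. X $$ (i, k) * Y $$ (k, i))"
    unfolding mat_trace_def using assms
    by (auto simp: scalar_prod_def atLeast0LessThan intro!: sum.cong)
  also have "\<dots> = (\<Sum>k<m. \<Sum>i<n. Y $$ (k, i) * X $$ (i, k))"
    by (subst sum.swap) (simp add: mult.commute)
  also have "\<dots> = mat_trace (Y * X)"
    unfolding mat_trace_def using assms
    by (auto simp: scalar_prod_def atLeast0LessThan intro!: sum.cong)
  finally show ?thesis .
qed

lemma mat_trace_similar:
  fixes A B :: "'a::comm_ring_1 mat"
  assumes "A \<in> carrier_mat n n" "similar_mat_wit A B P Q"
  shows "mat_trace A = mat_trace B"
proof -
  note wit = similar_mat_witD2[OF assms]
  have "mat_trace A = mat_trace (P * (B * Q))"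
    using wit by (simp add: assoc_mult_mat[of P n n B n Q n])
  also have "\<dots> = mat_trace ((B * Q) * P)"
    using wit by (intro mat_trace_mult_comm[of _ n n]) auto
  also have "\<dots> = mat_trace B"
    using wit by (simp add: assoc_mult_mat[of B n n Q n P n])
  finally show ?thesis .
qed

lemma upper_triangular_mult_diag:
  fixes B C :: "'a::comm_ring_1 mat"
  assumes "B \<in> carrier_mat n n" "C \<in> carrier_mat n n"
    and "upper_triangular B" "upper_triangular C" and "i < n"
  shows "(B * C) $$ (i, i) = B $$ (i, i) * C $$ (i, i)"
proof -
  have "(B * C) $$ (i, i) = (\<Sum>k\<in>{0..<n}. B $$ (i, k) * C $$ (k, i))"
    using assms by (simp add: scalar_prod_def)
  also have "\<dots> = (\<Sum>k\<in>{i}. B $$ (i, k) * C $$ (k, i))"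
  proof (rule sum.mono_neutral_right)
    show "\<forall>k\<in>{0..<n} - {i}. B $$ (i, k) * C $$ (k, i) = 0"
    proof
      fix k assume k: "k \<in> {0..<n} - {i}"
      then consider "k < i" | "i < k" by force
      then show "B $$ (i, k) * C $$ (k, i) = 0"
        using assms k by cases (auto simp: upper_triangular_def)
    qed
  qed (use assms in auto)
  finally show ?thesis by simp
qed

lemma mat_trace_eigenvalue_sums:
  fixes A :: "'a::conjugatable_ordered_field mat"
  assumes A: "A \<in> carrier_mat n n"
    and cp: "char_poly A = (\<Prod>a\<leftarrow>es. [:- a, 1:])" and len: "length es = n"
  shows "mat_trace A = sum_list es"
    and "mat_trace (A * A) = sum_list (map (\<lambda>e. e ^ 2) es)"
proof -
  obtain B P Q where "schur_decomposition A es = (B, P, Q)"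
    by (cases "schur_decomposition A es")
  from schur_decomposition[OF A cp this]
  have sim: "similar_mat_wit A B P Q" and ut: "upper_triangular B" and dg: "diag_mat B = es"
    by auto
  have B: "B \<in> carrier_mat n n" using similar_mat_witD2[OF A sim] by auto
  have Bii: "B $$ (i, i) = es ! i" if "i < n" for i
    using dg that B unfolding diag_mat_def by auto
  have sum_es: "(\<Sum>i<n. f (es ! i)) = sum_list (map f es)" for f :: "'a \<Rightarrow> 'a"
    using len by (simp add: sum_list_sum_nth atLeast0LessThan)
  have "mat_trace A = mat_trace B" by (rule mat_trace_similar[OF A sim])
  also have "\<dots> = sum_list es"
    using B Bii sum_es[of id] by (simp add: mat_trace_def)
  finally show "mat_trace A = sum_list es" .
  have "similar_mat_wit (A ^\<^sub>m 2) (B ^\<^sub>m 2) P Q" by (rule similar_mat_wit_pow[OF sim])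
  moreover have "A ^\<^sub>m 2 = A * A" "B ^\<^sub>m 2 = B * B"
    using A B by (simp_all add: numeral_2_eq_2)
  ultimately have "mat_trace (A * A) = mat_trace (B * B)"
    using A by (intro mat_trace_similar[of _ n]) auto
  also have "\<dots> = sum_list (map (\<lambda>e. e ^ 2) es)"
    using B Bii upper_triangular_mult_diag[OF B B ut ut] sum_es[of "\<lambda>e. e ^ 2"]
    by (simp add: mat_trace_def power2_eq_square)
  finally show "mat_trace (A * A) = sum_list (map (\<lambda>e. e ^ 2) es)" .
qed

(* For nonpositive numbers the cross terms of (sum x)^2 are nonnegative. *)
lemma sum_squares_le_square_sum:
  fixes xs :: "real list"
  assumes "\<forall>x\<in>set xs. x \<le> 0"
  shows "sum_list (map (\<lambda>x. x ^ 2) xs) \<le> (sum_list xs) ^ 2"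
  using assms
proof (induction xs)
  case (Cons x xs)
  have "0 \<le> x * sum_list xs"
    using Cons.prems by (simp add: mult_nonpos_nonpos sum_list_nonpos)
  then show ?case using Cons by (simp add: power2_sum)
qed simp

(* With at least two strictly negative summands a cross term is strictly positive. *)
lemma sum_squares_less_square_sum:
  fixes xs :: "real list"
  assumes "\<forall>x\<in>set xs. x < 0" and "length xs \<ge> 2"
  shows "sum_list (map (\<lambda>x. x ^ 2) xs) < (sum_list xs) ^ 2"
proof -
  obtain x ys where xs: "xs = x # ys" and "ys \<noteq> []"
    using assms(2) by (cases xs) fastforce+
  then have "sum_list ys < 0"
    using assms(1) by (induction ys) (auto intro: add_neg_nonpos simp: sum_list_nonpos less_imp_le)
  then have "0 < x * sum_list ys" using assms(1) xs by (simp add: mult_neg_neg)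
  moreover have "sum_list (map (\<lambda>x. x ^ 2) ys) \<le> (sum_list ys) ^ 2"
    using assms(1) xs by (intro sum_squares_le_square_sum) auto
  ultimately show ?thesis using xs by (simp add: power2_sum)
qed

(* The complex form of the previous inequality, using Re(e^2) = (Re e)^2 - (Im e)^2. *)
lemma Re_sum_squares_less:
  fixes es :: "complex list"
  assumes "\<forall>e\<in>set es. Re e < 0" and "length es \<ge> 2"
  shows "Re (sum_list (map (\<lambda>e. e ^ 2) es)) < (Re (sum_list es)) ^ 2"
proof -
  have "Re (sum_list (map (\<lambda>e. e ^ 2) es)) = sum_list (map (\<lambda>e. Re e ^ 2 - Im e ^ 2) es)"
    by (induction es) (auto simp: power2_eq_square)
  also have "\<dots> \<le> sum_list (map (\<lambda>x. x ^ 2) (map Re es))"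
    by (induction es) (simp_all, smt (verit) zero_le_power2)
  also have "\<dots> < (sum_list (map Re es)) ^ 2"
    using assms by (intro sum_squares_less_square_sum) auto
  also have "sum_list (map Re es) = Re (sum_list es)"
    by (induction es) auto
  finally show ?thesis .
qed

lemma stable_trace_inequality:
  fixes A :: "real mat"
  assumes A: "A \<in> carrier_mat n n" and n: "n \<ge> 2" and stable: "stable_mat A"
  shows "mat_trace (A * A) < (mat_trace A) ^ 2"
proof -
  define C where "C = map_mat complex_of_real A"
  have C: "C \<in> carrier_mat n n" unfolding C_def using A by simp
  obtain es where cp: "char_poly C = (\<Prod>a\<leftarrow>es. [:- a, 1:])" and len: "length es = n"
    using char_poly_factorized[OF C] by blast
  have neg: "\<forall>e\<in>set es. Re e < 0"
  proof
    fix e assume "e \<in> set es"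
    then have "poly (char_poly C) e = 0"
      unfolding cp poly_prod_list by (auto simp: prod_list_zero_iff)
    then have "eigenvalue C e" using eigenvalue_root_char_poly[OF C] by simp
    then show "Re e < 0" using stable unfolding stable_mat_def C_def by blast
  qed
  have "complex_of_real (mat_trace A) = mat_trace C"
    using A unfolding C_def mat_trace_def by simp
  then have trA: "mat_trace A = Re (sum_list es)"
    using mat_trace_eigenvalue_sums(1)[OF C cp len] by (metis Re_complex_of_real)
  have "C * C = map_mat complex_of_real (A * A)"
    unfolding C_def using of_real_hom.mat_hom_mult[OF A A] by (rule sym)
  then have "complex_of_real (mat_trace (A * A)) = mat_trace (C * C)"
    using A unfolding mat_trace_def by simp
  then have "mat_trace (A * A) = Re (sum_list (map (\<lambda>e. e ^ 2) es))"
    using mat_trace_eigenvalue_sums(2)[OF C cp len] by (metis Re_complex_of_real)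
  also have "\<dots> < (mat_trace A) ^ 2"
    unfolding trA using neg len n by (intro Re_sum_squares_less) auto
  finally show ?thesis .
qed



lemma sum_pos_imp_pos_term:
  fixes f :: "'a \<Rightarrow> 'b::{ordered_comm_monoid_add, linorder}"
  assumes "0 < sum f S"
  shows "\<exists>x\<in>S. 0 < f x"
  using assms sum_nonpos[of S f] by (meson not_le)

lemma trace_square_minus_trace_mult:
  fixes A :: "'a::comm_ring_1 mat"
  assumes A: "A \<in> carrier_mat n n"
  shows "(mat_trace A) ^ 2 - mat_trace (A * A)
    = (\<Sum>i<n. \<Sum>k<n. A $$ (i, i) * A $$ (k, k) - A $$ (i, k) * A $$ (k, i))"
proof -
  have "(mat_trace A) ^ 2 = (\<Sum>i<n. \<Sum>k<n. A $$ (i, i) * A $$ (k, k))"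
    using A by (simp add: mat_trace_def power2_eq_square sum_product)
  moreover have "mat_trace (A * A) = (\<Sum>i<n. \<Sum>k<n. A $$ (i, k) * A $$ (k, i))"
    using A by (simp add: mat_trace_def scalar_prod_def atLeast0LessThan)
  ultimately show ?thesis by (simp add: sum_subtractf)
qed

(* Hence tr (A^2) < (tr A)^2 forces a positive 2x2 principal minor; the diagonal
   terms i = k vanish and the minor is symmetric in i and k, so we may take i < k. *)
lemma exists_positive_principal_minor:
  fixes A :: "'a::linordered_idom mat"
  assumes A: "A \<in> carrier_mat n n" and lt: "mat_trace (A * A) < (mat_trace A) ^ 2"
  shows "\<exists>i k. i < k \<and> k < n \<and> 0 < A $$ (i, i) * A $$ (k, k) - A $$ (i, k) * A $$ (k, i)"
proof -
  define m where "m i k = A $$ (i, i) * A $$ (k, k) - A $$ (i, k) * A $$ (k, i)" for i k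
  have "(\<Sum>i<n. \<Sum>k<n. m i k) = (mat_trace A) ^ 2 - mat_trace (A * A)"
    unfolding m_def by (rule trace_square_minus_trace_mult[OF A, symmetric])
  with lt have "0 < (\<Sum>i<n. \<Sum>k<n. m i k)" by simp
  then obtain i where i: "i < n" "0 < (\<Sum>k<n. m i k)"
    using sum_pos_imp_pos_term[of "\<lambda>i. \<Sum>k<n. m i k"] by auto
  then obtain k where k: "k < n" "0 < m i k"
    using sum_pos_imp_pos_term[of "m i"] by auto
  have sym: "m k i = m i k" unfolding m_def by (simp add: mult.commute)
  have "i \<noteq> k" using k(2) unfolding m_def by auto
  then consider "i < k" | "k < i" by linarith
  then show ?thesis
  proof cases
    case 1 then show ?thesis using k unfolding m_def by blast
  next
    case 2
    have "0 < m k i" using k(2) sym by simp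
    then show ?thesis using 2 i unfolding m_def by blast
  qed
qed

lemma det_2x2:
  fixes M :: "'a::comm_ring_1 mat"
  assumes "M \<in> carrier_mat 2 2"
  shows "det M = M $$ (0, 0) * M $$ (1, 1) - M $$ (0, 1) * M $$ (1, 0)"
proof -
  have "det M = (\<Sum>j<2. M $$ (0, j) * cofactor M 0 j)"
    by (rule laplace_expansion_row[OF assms]) simp
  also have "\<dots> = M $$ (0, 0) * M $$ (1, 1) - M $$ (0, 1) * M $$ (1, 0)"
    using assms by (simp add: numeral_2_eq_2 cofactor_def det_single mat_delete_def)
  finally show ?thesis .
qed

lemma eigenvalue_2x2_quadratic:
  fixes M :: "'a::field mat"
  assumes M: "M \<in> carrier_mat 2 2" and "eigenvalue M z"
  shows "z ^ 2 - (M $$ (0, 0) + M $$ (1, 1)) * z + det M = 0"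
proof -
  have "det (char_matrix M z) = 0" using assms eigenvalue_det[OF M] by simp
  moreover have "det (char_matrix M z)
      = (M $$ (0, 0) - z) * (M $$ (1, 1) - z) - M $$ (0, 1) * M $$ (1, 0)"
    using M by (simp add: det_2x2 char_matrix_def)
  ultimately show ?thesis
    using M by (simp add: det_2x2 power2_eq_square algebra_simps)
qed

(* Both roots of a real quadratic z^2 - t z + d with t < 0 < d have negative real
   part: a non-real root has real part t/2, and a real root x satisfies
   x (x - t) = -d < 0, which is impossible for x >= 0. *)
lemma quadratic_root_Re_neg:
  fixes z :: complex and t d :: real
  assumes root: "z ^ 2 - of_real t * z + of_real d = 0" and "t < 0" "d > 0"
  shows "Re z < 0"
proof -
  obtain x y where z: "z = Complex x y" by (cases z)
  have re: "x ^ 2 - y ^ 2 - t * x + d = 0" and im: "(2 * x - t) * y = 0"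
    using root unfolding z complex_eq_iff by (auto simp: power2_eq_square algebra_simps)
  show ?thesis
  proof (cases "y = 0")
    case True
    with re have "x * (x - t) = - d" by (simp add: power2_eq_square algebra_simps)
    then show ?thesis using assms(2,3) z
      by (smt (verit) mult_nonneg_nonneg complex.sel(1))
  next
    case False
    with im have "x = t / 2" by simp
    then show ?thesis using z assms(2) by simp
  qed
qed

lemma stable_2x2:
  fixes M :: "real mat"
  assumes M: "M \<in> carrier_mat 2 2"
    and diag: "M $$ (0, 0) < 0" "M $$ (1, 1) < 0" and det: "det M > 0"
  shows "stable_mat M"
  unfolding stable_mat_def
proof (intro allI impI)
  fix z :: complex
  let ?C = "map_mat complex_of_real M"
  assume "eigenvalue ?C z"
  then have "z ^ 2 - (?C $$ (0, 0) + ?C $$ (1, 1)) * z + det ?C = 0"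
    using M by (intro eigenvalue_2x2_quadratic) auto
  then have "z ^ 2 - of_real (M $$ (0, 0) + M $$ (1, 1)) * z + of_real (det M) = 0"
    using M by simp
  then show "Re z < 0"
    by (rule quadratic_root_Re_neg) (use diag det in auto)
qed

lemma submatrix_pair:
  fixes A :: "'a mat"
  assumes A: "A \<in> carrier_mat n n" and ij: "i < j" "j < n"
  defines "M \<equiv> submatrix A {i, j} {i, j}"
  shows "M \<in> carrier_mat 2 2"
    and "M $$ (0, 0) = A $$ (i, i)" "M $$ (0, 1) = A $$ (i, j)"
    and "M $$ (1, 0) = A $$ (j, i)" "M $$ (1, 1) = A $$ (j, j)"
proof -
  let ?I = "{i, j}"
  have rows: "{x. x < dim_row A \<and> x \<in> ?I} = ?I" and cols: "{x. x < dim_col A \<and> x \<in> ?I} = ?I"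
    using A ij by auto
  have card: "card ?I = 2" using ij by auto
  show "M \<in> carrier_mat 2 2"
    unfolding M_def carrier_mat_def mem_Collect_eq dim_submatrix rows cols card by simp
  have pick0: "pick ?I 0 = i"
  proof -
    have "card {a\<in>?I. a < i} = 0" using ij by auto
    then show ?thesis using pick_card_in_set[of i ?I] by (metis insertI1)
  qed
  have pick1: "pick ?I 1 = j"
  proof -
    have "{a\<in>?I. a < j} = {i}" using ij by auto
    then have "card {a\<in>?I. a < j} = 1" by simp
    then show ?thesis using pick_card_in_set[of j ?I] by (metis insertI1 insertI2)
  qed
  have entry: "M $$ (a, b) = A $$ (pick ?I a, pick ?I b)" if "a < 2" "b < 2" for a b
    unfolding M_def using that by (intro submatrix_index) (simp_all only: rows cols card)
  show "M $$ (0, 0) = A $$ (i, i)" "M $$ (0, 1) = A $$ (i, j)"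
    "M $$ (1, 0) = A $$ (j, i)" "M $$ (1, 1) = A $$ (j, j)"
    using entry pick0 pick1 by simp_all
qed

theorem mainTheorem13:
  fixes A :: "real mat" and n :: nat
  assumes "A \<in> carrier_mat n n"
    and "n \<ge> 2"
    and "\<forall>i<n. A $$ (i, i) < 0"
    and "stable_mat A"
  shows "\<exists>I. I \<subseteq> {..<n} \<and> card I = 2 \<and> stable_mat (submatrix A I I)"
proof -
  have "mat_trace (A * A) < (mat_trace A) ^ 2"
    using assms(1,2,4) by (rule stable_trace_inequality)
  then obtain i k where ik: "i < k" "k < n"
    and minor: "0 < A $$ (i, i) * A $$ (k, k) - A $$ (i, k) * A $$ (k, i)"
    using exists_positive_principal_minor[OF assms(1)] by blast
  note M = submatrix_pair[OF assms(1) ik]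
  have "stable_mat (submatrix A {i, k} {i, k})"
  proof (rule stable_2x2[OF M(1)])
    show "submatrix A {i, k} {i, k} $$ (0, 0) < 0" "submatrix A {i, k} {i, k} $$ (1, 1) < 0"
      using M assms(3) ik by auto
    show "det (submatrix A {i, k} {i, k}) > 0"
      using M minor by (simp add: det_2x2)
  qed
  moreover have "{i, k} \<subseteq> {..<n}" "card {i, k} = 2" using ik by auto
  ultimately show ?thesis by blast
qed

end
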